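(* With the notation of the context, assume that $L$ is nonresonant in $X_{N,T}$, $X_{D,T}$, $X_{M_1,T}$ and $X_{M_2,T}$, that $\widetilde L$ is nonresonant in $X_{N,2T}$ and $X_{D,2T}$, and that $\widetilde{\widetilde L}$ is nonresonant in $X_{P,4T}$. Then for all $(t,s)\in I\times I$, \[G_P[4T](t,s)=\tfrac14\big(G_N[T](t,s)+G_D[T](t,s)+G_{M_1}[T](t,s)+G_{M_2}[T](t,s)\big).\]
   Context: Fix $n\ge 1$, $T>0$, $I=[0,T]$, $J=[0,2T]$. $W^{2n,1}(K)$: $u\in C^{2n-1}(K)$ with $u^{(2n-1)}$ absolutely continuous. Let $a_0,\dots,a_{2n-1}\in L^{\alpha}(I)$, $\alpha\ge1$, $Lu=u^{(2n)}+\sum_{k=0}^{2n-1}a_ku^{(k)}$ on $I$. $\widetilde L u=u^{(2n)}+\sum_{k=0}^{n-1}(\hat a_{2k+1}u^{(2k+1)}+\tilde a_{2k}u^{(2k)})$ on $J$, where $\tilde a_{2k}=a_{2k}$, $\hat a_{2k+1}=a_{2k+1}$ on $I$, and $\tilde a_{2k}(t)=a_{2k}(2T-t)$, $\hat a_{2k+1}(t)=-a_{2k+1}(2T-t)$ for $t\in(T,2T]$; $\widetilde{\widetilde L}$ on $[0,4T]$ is obtained by the same construction from $\widetilde L$ (reflection about $2T$). Nonresonance of $M$ in $X$: $Mu=0$ a.e., $u\in X$ implies $u\equiv0$; the Green's function $G$ then gives the unique solution $u(t)=\int G(t,s)\sigma(s)ds$ of $Mu=\sigma$, $u\in X$. Spaces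 ($k=0,\dots,n-1$ unless stated): $X_{N,T}$: $u^{(2k+1)}(0)=u^{(2k+1)}(T)=0$; $X_{D,T}$: $u^{(2k)}(0)=u^{(2k)}(T)=0$; $X_{M_1,T}$: $u^{(2k+1)}(0)=u^{(2k)}(T)=0$; $X_{M_2,T}$: $u^{(2k)}(0)=u^{(2k+1)}(T)=0$ (all in $W^{2n,1}(I)$); $X_{N,2T}$, $X_{D,2T}$: the analogous Neumann/Dirichlet conditions at $0$ and $2T$ in $W^{2n,1}(J)$; $X_{P,4T}=\{u\in W^{2n,1}([0,4T]): u^{(k)}(0)=u^{(k)}(4T),\ k=0,\dots,2n-1\}$. $G_N[T],G_D[T],G_{M_1}[T],G_{M_2}[T]$ are the Green's functions of $L$ on $X_{N,T},X_{D,T},X_{M_1,T},X_{M_2,T}$, and $G_P[4T]$ that of $\widetilde{\widetilde L}$ on $X_{P,4T}$. *)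

theory Defs
  imports "HOL-Analysis.Analysis"
begin

definition abs_cont_on :: "real \<Rightarrow> real \<Rightarrow> (real \<Rightarrow> real) \<Rightarrow> bool" where
  "abs_cont_on lo hi f \<longleftrightarrow>
     (\<forall>\<epsilon>>0. \<exists>\<delta>>0. \<forall>(N::nat) (x::nat \<Rightarrow> real) (y::nat \<Rightarrow> real).
        (\<forall>i<N. lo \<le> x i \<and> x i \<le> y i \<and> y i \<le> hi) \<and>
        (\<forall>i<N. \<forall>j<N. i \<noteq> j \<longrightarrow> y i \<le> x j \<or> y j \<le> x i) \<and>
        (\<Sum>i<N. y i - x i) < \<delta>
        \<longrightarrow> (\<Sum>i<N. \<bar>f (y i) - f (x i)\<bar>) < \<epsilon>)"

text \<open>Membership in W^{m,1}([lo,hi]) (here m = 2n), witnessed by the family D of derivatives: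
  D 0 = u on the interval, D k is the k-th derivative (within the interval) for k \<le> m-1,
  all of them continuous (so u \<in> C^{m-1}), and D (m-1) absolutely continuous.\<close>
definition W_space :: "nat \<Rightarrow> real \<Rightarrow> real \<Rightarrow> (real \<Rightarrow> real) \<Rightarrow> (nat \<Rightarrow> real \<Rightarrow> real) \<Rightarrow> bool" where
  "W_space m lo hi u D \<longleftrightarrow>
     (\<forall>t\<in>{lo..hi}. D 0 t = u t) \<and>
     (\<forall>k<m. continuous_on {lo..hi} (D k)) \<and>
     (\<forall>k. Suc k < m \<longrightarrow> (\<forall>t\<in>{lo..hi}. (D k has_real_derivative D (Suc k) t) (at t within {lo..hi}))) \<and>
     abs_cont_on lo hi (D (m - 1))"

text \<open>M u = \<sigma> a.e. on [lo,hi], where M u = u^{(m)} + \<Sum>_{k<m} c_k u^{(k)}; u^{(m)} is the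
  (a.e. existing) derivative of the absolutely continuous function u^{(m-1)} = D (m-1).\<close>
definition solves_ae :: "(nat \<Rightarrow> real \<Rightarrow> real) \<Rightarrow> nat \<Rightarrow> real \<Rightarrow> real \<Rightarrow> (nat \<Rightarrow> real \<Rightarrow> real)
    \<Rightarrow> (real \<Rightarrow> real) \<Rightarrow> bool" where
  "solves_ae c m lo hi D \<sigma> \<longleftrightarrow>
     (AE t in lborel. t \<in> {lo..hi} \<longrightarrow>
        (\<exists>d. (D (m - 1) has_real_derivative d) (at t within {lo..hi}) \<and>
             d + (\<Sum>k<m. c k t * D k t) = \<sigma> t))"

definition bc_N :: "nat \<Rightarrow> real \<Rightarrow> real \<Rightarrow> (nat \<Rightarrow> real \<Rightarrow> real) \<Rightarrow> bool" where
  "bc_N n lo hi D \<longleftrightarrow> (\<forall>k<n. D (2*k+1) lo = 0 \<and> D (2*k+1) hi = 0)"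
definition bc_D :: "nat \<Rightarrow> real \<Rightarrow> real \<Rightarrow> (nat \<Rightarrow> real \<Rightarrow> real) \<Rightarrow> bool" where
  "bc_D n lo hi D \<longleftrightarrow> (\<forall>k<n. D (2*k) lo = 0 \<and> D (2*k) hi = 0)"
definition bc_M1 :: "nat \<Rightarrow> real \<Rightarrow> real \<Rightarrow> (nat \<Rightarrow> real \<Rightarrow> real) \<Rightarrow> bool" where
  "bc_M1 n lo hi D \<longleftrightarrow> (\<forall>k<n. D (2*k+1) lo = 0 \<and> D (2*k) hi = 0)"
definition bc_M2 :: "nat \<Rightarrow> real \<Rightarrow> real \<Rightarrow> (nat \<Rightarrow> real \<Rightarrow> real) \<Rightarrow> bool" where
  "bc_M2 n lo hi D \<longleftrightarrow> (\<forall>k<n. D (2*k) lo = 0 \<and> D (2*k+1) hi = 0)"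
definition bc_P :: "nat \<Rightarrow> real \<Rightarrow> real \<Rightarrow> (nat \<Rightarrow> real \<Rightarrow> real) \<Rightarrow> bool" where
  "bc_P n lo hi D \<longleftrightarrow> (\<forall>k<2*n. D k lo = D k hi)"

definition nonresonant :: "(nat \<Rightarrow> real \<Rightarrow> real) \<Rightarrow> nat \<Rightarrow> real \<Rightarrow> real
    \<Rightarrow> ((nat \<Rightarrow> real \<Rightarrow> real) \<Rightarrow> bool) \<Rightarrow> bool" where
  "nonresonant c m lo hi bc \<longleftrightarrow>
     (\<forall>u D. W_space m lo hi u D \<and> bc D \<and> solves_ae c m lo hi D (\<lambda>_. 0)
        \<longrightarrow> (\<forall>t\<in>{lo..hi}. u t = 0))"

definition is_green :: "(nat \<Rightarrow> real \<Rightarrow> real) \<Rightarrow> nat \<Rightarrow> real \<Rightarrow> real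
    \<Rightarrow> ((nat \<Rightarrow> real \<Rightarrow> real) \<Rightarrow> bool) \<Rightarrow> (real \<Rightarrow> real \<Rightarrow> real) \<Rightarrow> bool" where
  "is_green c m lo hi bc G \<longleftrightarrow>
     continuous_on ({lo..hi} \<times> {lo..hi}) (\<lambda>(t, s). G t s) \<and>
     (\<forall>\<sigma>. \<sigma> absolutely_integrable_on {lo..hi} \<longrightarrow>
        (\<exists>D. W_space m lo hi (\<lambda>t. integral {lo..hi} (\<lambda>s. G t s * \<sigma> s)) D \<and> bc D \<and>
             solves_ae c m lo hi D \<sigma>))"

definition refl_coeff :: "real \<Rightarrow> (nat \<Rightarrow> real \<Rightarrow> real) \<Rightarrow> nat \<Rightarrow> real \<Rightarrow> real" where
  "refl_coeff T c k t = (if t \<le> T then c k t else (-1) ^ k * c k (2 * T - t))"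

definition in_Lp :: "real \<Rightarrow> real \<Rightarrow> real \<Rightarrow> (real \<Rightarrow> real) \<Rightarrow> bool" where
  "in_Lp p lo hi f \<longleftrightarrow> f measurable_on {lo..hi} \<and> (\<lambda>t. \<bar>f t\<bar> powr p) integrable_on {lo..hi}"

end

theory Submission
  imports Defs
begin

text \<open>A solution of \<open>L u = \<sigma>\<close> satisfying one of the four boundary conditions on \<open>[0,T]\<close> is
  extended to \<open>[0,4T]\<close> by reflecting it about \<open>T\<close> and then about \<open>2T\<close>, evenly or oddly as its
  boundary conditions dictate. The result is a \<open>4T\<close>-periodic solution of the doubly reflected
  equation with the correspondingly reflected right-hand side, so by nonresonance it is given by
  \<open>G_P[4T]\<close>. The four reflected right-hand sides add up to \<open>4\<sigma>\<close> on \<open>[0,T]\<close> and cancel on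
  \<open>(T,4T]\<close>; hence the average of the four Green's functions and \<open>G_P[4T](t,\<cdot>)\<close> integrate every
  \<open>\<sigma>\<close> alike, and testing with their difference gives pointwise equality by continuity.\<close>

section \<open>Absolute continuity\<close>

definition nonoverlapping_subintervals :: "real \<Rightarrow> real \<Rightarrow> nat \<Rightarrow> (nat \<Rightarrow> real) \<Rightarrow> (nat \<Rightarrow> real) \<Rightarrow> bool" where
  "nonoverlapping_subintervals lo hi N x y \<longleftrightarrow>
     (\<forall>i<N. lo \<le> x i \<and> x i \<le> y i \<and> y i \<le> hi) \<and>
     (\<forall>i<N. \<forall>j<N. i \<noteq> j \<longrightarrow> y i \<le> x j \<or> y j \<le> x i)"

lemma abs_cont_on_iff:
  "abs_cont_on lo hi f \<longleftrightarrow>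
     (\<forall>\<epsilon>>0. \<exists>\<delta>>0. \<forall>N x y. nonoverlapping_subintervals lo hi N x y \<longrightarrow> (\<Sum>i<N. y i - x i) < \<delta>
        \<longrightarrow> (\<Sum>i<N. \<bar>f (y i) - f (x i)\<bar>) < \<epsilon>)"
  unfolding abs_cont_on_def nonoverlapping_subintervals_def by (simp only: conj_assoc imp_conjL)

lemma abs_cont_onE:
  assumes "abs_cont_on lo hi f" "\<epsilon> > 0"
  obtains \<delta> where "\<delta> > 0" "\<And>N x y. nonoverlapping_subintervals lo hi N x y \<Longrightarrow>
      (\<Sum>i<N. y i - x i) < \<delta> \<Longrightarrow> (\<Sum>i<N. \<bar>f (y i) - f (x i)\<bar>) < \<epsilon>"
  using assms unfolding abs_cont_on_iff by blast

lemma abs_cont_onI: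
  assumes "\<And>\<epsilon>. \<epsilon> > 0 \<Longrightarrow> \<exists>\<delta>>0. \<forall>N x y. nonoverlapping_subintervals lo hi N x y \<longrightarrow>
      (\<Sum>i<N. y i - x i) < \<delta> \<longrightarrow> (\<Sum>i<N. \<bar>f (y i) - f (x i)\<bar>) < \<epsilon>"
  shows "abs_cont_on lo hi f"
  unfolding abs_cont_on_iff using assms by blast

lemma nonoverlapping_subintervals_mono_image:
  assumes "mono \<phi>" "nonoverlapping_subintervals lo hi N x y"
  shows "nonoverlapping_subintervals (\<phi> lo) (\<phi> hi) N (\<lambda>i. \<phi> (x i)) (\<lambda>i. \<phi> (y i))"
  using assms unfolding nonoverlapping_subintervals_def mono_def by meson

lemma nonoverlapping_subintervals_reflect:
  assumes "nonoverlapping_subintervals lo hi N x y"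
  shows "nonoverlapping_subintervals (c - hi) (c - lo) N (\<lambda>i. c - y i) (\<lambda>i. c - x i)"
  using assms unfolding nonoverlapping_subintervals_def by force

lemma abs_cont_on_cong:
  assumes f: "abs_cont_on lo hi f" and eq: "\<And>t. t \<in> {lo..hi} \<Longrightarrow> f t = g t"
  shows "abs_cont_on lo hi g"
proof (rule abs_cont_onI)
  fix \<epsilon> :: real assume "\<epsilon> > 0"
  then obtain \<delta> where "\<delta> > 0" and \<delta>: "\<And>N x y. nonoverlapping_subintervals lo hi N x y \<Longrightarrow>
      (\<Sum>i<N. y i - x i) < \<delta> \<Longrightarrow> (\<Sum>i<N. \<bar>f (y i) - f (x i)\<bar>) < \<epsilon>"
    using abs_cont_onE[OF f] by blast
  have "(\<Sum>i<N. \<bar>g (y i) - g (x i)\<bar>) = (\<Sum>i<N. \<bar>f (y i) - f (x i)\<bar>)"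
    if "nonoverlapping_subintervals lo hi N x y" for N :: nat and x y
    using that eq unfolding nonoverlapping_subintervals_def by (intro sum.cong) auto
  with \<open>\<delta> > 0\<close> \<delta> show "\<exists>\<delta>>0. \<forall>N x y. nonoverlapping_subintervals lo hi N x y \<longrightarrow>
      (\<Sum>i<N. y i - x i) < \<delta> \<longrightarrow> (\<Sum>i<N. \<bar>g (y i) - g (x i)\<bar>) < \<epsilon>"
    by auto
qed

lemma abs_cont_on_cmult:
  assumes f: "abs_cont_on lo hi f"
  shows "abs_cont_on lo hi (\<lambda>t. k * f t)"
proof (rule abs_cont_onI)
  fix \<epsilon> :: real assume "\<epsilon> > 0"
  then have "\<epsilon> / (\<bar>k\<bar> + 1) > 0" by simp
  then obtain \<delta> where "\<delta> > 0" and \<delta>: "\<And>N x y. nonoverlapping_subintervals lo hi N x y \<Longrightarrow>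
      (\<Sum>i<N. y i - x i) < \<delta> \<Longrightarrow> (\<Sum>i<N. \<bar>f (y i) - f (x i)\<bar>) < \<epsilon> / (\<bar>k\<bar> + 1)"
    using abs_cont_onE[OF f] by blast
  have "(\<Sum>i<N. \<bar>k * f (y i) - k * f (x i)\<bar>) < \<epsilon>"
    if "(\<Sum>i<N. \<bar>f (y i) - f (x i)\<bar>) < \<epsilon> / (\<bar>k\<bar> + 1)" for N :: nat and x y
  proof -
    have "(\<Sum>i<N. \<bar>k * f (y i) - k * f (x i)\<bar>) = \<bar>k\<bar> * (\<Sum>i<N. \<bar>f (y i) - f (x i)\<bar>)"
      by (simp add: sum_distrib_left abs_mult flip: right_diff_distrib)
    also have "\<dots> \<le> (\<bar>k\<bar> + 1) * (\<Sum>i<N. \<bar>f (y i) - f (x i)\<bar>)"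
      by (intro mult_right_mono sum_nonneg) auto
    also have "\<dots> < \<epsilon>"
      using that by (simp add: field_simps)
    finally show ?thesis .
  qed
  with \<open>\<delta> > 0\<close> \<delta> show "\<exists>\<delta>>0. \<forall>N x y. nonoverlapping_subintervals lo hi N x y \<longrightarrow>
      (\<Sum>i<N. y i - x i) < \<delta> \<longrightarrow> (\<Sum>i<N. \<bar>k * f (y i) - k * f (x i)\<bar>) < \<epsilon>"
    by blast
qed

lemma abs_cont_on_diff:
  assumes f: "abs_cont_on lo hi f" and g: "abs_cont_on lo hi g"
  shows "abs_cont_on lo hi (\<lambda>t. f t - g t)"
proof (rule abs_cont_onI)
  fix \<epsilon> :: real assume "\<epsilon> > 0"
  then have "\<epsilon> / 2 > 0" by simp
  obtain \<delta>f where "\<delta>f > 0" and \<delta>f: "\<And>N x y. nonoverlapping_subintervals lo hi N x y \<Longrightarrow>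
      (\<Sum>i<N. y i - x i) < \<delta>f \<Longrightarrow> (\<Sum>i<N. \<bar>f (y i) - f (x i)\<bar>) < \<epsilon> / 2"
    using abs_cont_onE[OF f \<open>\<epsilon> / 2 > 0\<close>] by blast
  obtain \<delta>g where "\<delta>g > 0" and \<delta>g: "\<And>N x y. nonoverlapping_subintervals lo hi N x y \<Longrightarrow>
      (\<Sum>i<N. y i - x i) < \<delta>g \<Longrightarrow> (\<Sum>i<N. \<bar>g (y i) - g (x i)\<bar>) < \<epsilon> / 2"
    using abs_cont_onE[OF g \<open>\<epsilon> / 2 > 0\<close>] by blast
  have "(\<Sum>i<N. \<bar>(f (y i) - g (y i)) - (f (x i) - g (x i))\<bar>) < \<epsilon>"
    if "nonoverlapping_subintervals lo hi N x y" "(\<Sum>i<N. y i - x i) < min \<delta>f \<delta>g" for N :: nat and x y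
  proof -
    have "(\<Sum>i<N. \<bar>(f (y i) - g (y i)) - (f (x i) - g (x i))\<bar>)
        \<le> (\<Sum>i<N. \<bar>f (y i) - f (x i)\<bar>) + (\<Sum>i<N. \<bar>g (y i) - g (x i)\<bar>)"
      unfolding sum.distrib[symmetric] by (intro sum_mono) linarith
    also have "\<dots> < \<epsilon> / 2 + \<epsilon> / 2"
      using that \<delta>f \<delta>g by (intro add_strict_mono) auto
    finally show ?thesis by simp
  qed
  moreover have "min \<delta>f \<delta>g > 0"
    using \<open>\<delta>f > 0\<close> \<open>\<delta>g > 0\<close> by simp
  ultimately show "\<exists>\<delta>>0. \<forall>N x y. nonoverlapping_subintervals lo hi N x y \<longrightarrow>
      (\<Sum>i<N. y i - x i) < \<delta> \<longrightarrow> (\<Sum>i<N. \<bar>(f (y i) - g (y i)) - (f (x i) - g (x i))\<bar>) < \<epsilon>"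
    by blast
qed

lemma abs_cont_on_reflect:
  assumes f: "abs_cont_on lo hi f"
  shows "abs_cont_on (c - hi) (c - lo) (\<lambda>t. f (c - t))"
proof (rule abs_cont_onI)
  fix \<epsilon> :: real assume "\<epsilon> > 0"
  then obtain \<delta> where "\<delta> > 0" and \<delta>: "\<And>N x y. nonoverlapping_subintervals lo hi N x y \<Longrightarrow>
      (\<Sum>i<N. y i - x i) < \<delta> \<Longrightarrow> (\<Sum>i<N. \<bar>f (y i) - f (x i)\<bar>) < \<epsilon>"
    using abs_cont_onE[OF f] by blast
  have "(\<Sum>i<N. \<bar>f (c - y i) - f (c - x i)\<bar>) < \<epsilon>"
    if "nonoverlapping_subintervals (c - hi) (c - lo) N x y" "(\<Sum>i<N. y i - x i) < \<delta>" for N :: nat and x y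
  proof -
    have "nonoverlapping_subintervals lo hi N (\<lambda>i. c - y i) (\<lambda>i. c - x i)"
      using nonoverlapping_subintervals_reflect[OF that(1), of c] by simp
    then show ?thesis
      using \<delta>[of N "\<lambda>i. c - y i" "\<lambda>i. c - x i"] that(2) by (simp add: abs_minus_commute)
  qed
  with \<open>\<delta> > 0\<close> show "\<exists>\<delta>>0. \<forall>N x y. nonoverlapping_subintervals (c - hi) (c - lo) N x y \<longrightarrow>
      (\<Sum>i<N. y i - x i) < \<delta> \<longrightarrow> (\<Sum>i<N. \<bar>f (c - y i) - f (c - x i)\<bar>) < \<epsilon>"
    by blast
qed

lemma abs_cont_on_join:
  assumes f1: "abs_cont_on a b f" and f2: "abs_cont_on b c f" and "a \<le> b" "b \<le> c"
  shows "abs_cont_on a c f"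
proof (rule abs_cont_onI)
  fix \<epsilon> :: real assume "\<epsilon> > 0"
  then have "\<epsilon> / 2 > 0" by simp
  obtain \<delta>1 where "\<delta>1 > 0" and \<delta>1: "\<And>N x y. nonoverlapping_subintervals a b N x y \<Longrightarrow>
      (\<Sum>i<N. y i - x i) < \<delta>1 \<Longrightarrow> (\<Sum>i<N. \<bar>f (y i) - f (x i)\<bar>) < \<epsilon> / 2"
    using abs_cont_onE[OF f1 \<open>\<epsilon> / 2 > 0\<close>] by blast
  obtain \<delta>2 where "\<delta>2 > 0" and \<delta>2: "\<And>N x y. nonoverlapping_subintervals b c N x y \<Longrightarrow>
      (\<Sum>i<N. y i - x i) < \<delta>2 \<Longrightarrow> (\<Sum>i<N. \<bar>f (y i) - f (x i)\<bar>) < \<epsilon> / 2"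
    using abs_cont_onE[OF f2 \<open>\<epsilon> / 2 > 0\<close>] by blast
  have "(\<Sum>i<N. \<bar>f (y i) - f (x i)\<bar>) < \<epsilon>"
    if xy: "nonoverlapping_subintervals a c N x y" and small: "(\<Sum>i<N. y i - x i) < min \<delta>1 \<delta>2"
    for N :: nat and x y
  proof -
    let ?x1 = "\<lambda>i. min (x i) b" and ?y1 = "\<lambda>i. min (y i) b"
    let ?x2 = "\<lambda>i. max (x i) b" and ?y2 = "\<lambda>i. max (y i) b"
    have "mono (\<lambda>t::real. min t b)" "mono (\<lambda>t::real. max t b)"
      by (auto simp: mono_def)
    from nonoverlapping_subintervals_mono_image[OF this(1) xy]
      nonoverlapping_subintervals_mono_image[OF this(2) xy]
    have xy1: "nonoverlapping_subintervals a b N ?x1 ?y1"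
      and xy2: "nonoverlapping_subintervals b c N ?x2 ?y2"
      using \<open>a \<le> b\<close> \<open>b \<le> c\<close> by (simp_all only: min.absorb1 min.absorb2 max.absorb1 max.absorb2)
    have le: "x i \<le> y i" if "i < N" for i
      using xy that unfolding nonoverlapping_subintervals_def by blast
    have "(\<Sum>i<N. ?y1 i - ?x1 i) \<le> (\<Sum>i<N. y i - x i)"
      and "(\<Sum>i<N. ?y2 i - ?x2 i) \<le> (\<Sum>i<N. y i - x i)"
      using le by (intro sum_mono; smt (verit) lessThan_iff)+
    then have "(\<Sum>i<N. \<bar>f (?y1 i) - f (?x1 i)\<bar>) + (\<Sum>i<N. \<bar>f (?y2 i) - f (?x2 i)\<bar>) < \<epsilon>"
      using \<delta>1[OF xy1] \<delta>2[OF xy2] small by linarith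
    moreover have "(\<Sum>i<N. \<bar>f (y i) - f (x i)\<bar>)
        \<le> (\<Sum>i<N. \<bar>f (?y1 i) - f (?x1 i)\<bar>) + (\<Sum>i<N. \<bar>f (?y2 i) - f (?x2 i)\<bar>)"
      unfolding sum.distrib[symmetric]
      using le by (intro sum_mono) (smt (verit) lessThan_iff)
    ultimately show ?thesis
      by linarith
  qed
  moreover have "min \<delta>1 \<delta>2 > 0"
    using \<open>\<delta>1 > 0\<close> \<open>\<delta>2 > 0\<close> by simp
  ultimately show "\<exists>\<delta>>0. \<forall>N x y. nonoverlapping_subintervals a c N x y \<longrightarrow>
      (\<Sum>i<N. y i - x i) < \<delta> \<longrightarrow> (\<Sum>i<N. \<bar>f (y i) - f (x i)\<bar>) < \<epsilon>"
    by blast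
qed

section \<open>Reflection about a point\<close>

lemma has_field_derivative_within_Icc_join:
  fixes a b c t :: real
  assumes "a \<le> b" "b \<le> c"
    and lower: "t \<le> b \<Longrightarrow> (f has_field_derivative d) (at t within {a..b})"
    and upper: "b \<le> t \<Longrightarrow> (f has_field_derivative d) (at t within {b..c})"
  shows "(f has_field_derivative d) (at t within {a..c})"
proof -
  have outside: "(f has_field_derivative d) (at t within S)" if "closed S" "t \<notin> S" for S
    unfolding has_field_derivative_iff
    by (rule Lim_trivial_limit, rule not_in_closure_trivial_limitI) (use that in \<open>simp add: closure_closed\<close>)
  have "(f has_field_derivative d) (at t within {a..b})"
    using lower outside[of "{a..b}"] by (cases "t \<le> b") auto
  moreover have "(f has_field_derivative d) (at t within {b..c})"
    using upper outside[of "{b..c}"] by (cases "b \<le> t") auto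
  moreover have "{a..c} = {a..b} \<union> {b..c}"
    using assms(1,2) by auto
  ultimately show ?thesis
    unfolding has_field_derivative_iff by (simp add: Lim_within_Un)
qed

lemma absolutely_integrable_on_reflect_interval:
  fixes f :: "real \<Rightarrow> real"
  assumes "f absolutely_integrable_on {a..b}"
  shows "(\<lambda>x. f (c - x)) absolutely_integrable_on {c - b..c - a}"
proof -
  have image: "(\<lambda>x. (1 / -1) *\<^sub>R x + - ((1 / -1) *\<^sub>R c)) ` cbox a b = {c - b..c - a}"
    by (auto simp: image_iff intro!: bexI[where x = "c - x" for x])
  have "f integrable_on cbox a b" "(\<lambda>x. norm (f x)) integrable_on cbox a b"
    using assms unfolding absolutely_integrable_on_def by auto
  from this[THEN integrable_affinity, of "-1" c]
  show ?thesis
    unfolding absolutely_integrable_on_def image by simp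
qed

lemma AE_lborel_reflect:
  fixes c :: real
  assumes "AE x in lborel. P x"
  shows "AE x in lborel. P (c - x)"
proof -
  from assms obtain N where N: "{x \<in> space lborel. \<not> P x} \<subseteq> N" "emeasure lborel N = 0" "N \<in> sets lborel"
    by (rule AE_E)
  have "AE x in lborel. x \<notin> N"
    using N by (intro AE_not_in) auto
  moreover have "Measurable.pred borel (\<lambda>x::real. x \<notin> N)"
    using N(3) by simp
  ultimately have "AE x in lborel. c + (-1) * x \<notin> N"
    by (intro AE_borel_affine) auto
  then show ?thesis
    by (rule eventually_mono) (use N(1) in auto)
qed

definition reflect_ext :: "real \<Rightarrow> nat \<Rightarrow> (real \<Rightarrow> real) \<Rightarrow> real \<Rightarrow> real" where
  "reflect_ext L p f t = (if t \<le> L then f t else (-1) ^ p * f (2 * L - t))"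

lemma reflect_ext_eq_upper:
  assumes "L \<le> t" "odd p \<Longrightarrow> f L = 0"
  shows "reflect_ext L p f t = (-1) ^ p * f (2 * L - t)"
  using assms by (cases "t = L"; cases "even p") (auto simp: reflect_ext_def)

lemma continuous_on_reflect_ext:
  assumes "L \<ge> 0" "continuous_on {0..L} f" "odd p \<Longrightarrow> f L = 0"
  shows "continuous_on {0..2*L} (reflect_ext L p f)"
proof -
  have "continuous_on {0..L} (reflect_ext L p f)"
    using assms(2) by (rule continuous_on_eq) (simp add: reflect_ext_def)
  moreover have "continuous_on {L..2*L} (\<lambda>t. (-1) ^ p * f (2 * L - t))"
    by (intro continuous_intros continuous_on_compose2[OF assms(2)]) auto
  then have "continuous_on {L..2*L} (reflect_ext L p f)"
    by (rule continuous_on_eq) (use reflect_ext_eq_upper assms(3) in auto)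
  moreover have "{0..2*L} = {0..L} \<union> {L..2*L}"
    using assms(1) by auto
  ultimately show ?thesis
    by (simp add: continuous_on_closed_Un)
qed

lemma abs_cont_on_reflect_ext:
  assumes "L \<ge> 0" "abs_cont_on 0 L f" "odd p \<Longrightarrow> f L = 0"
  shows "abs_cont_on 0 (2*L) (reflect_ext L p f)"
proof (rule abs_cont_on_join)
  show "abs_cont_on 0 L (reflect_ext L p f)"
    using assms(2) by (rule abs_cont_on_cong) (simp add: reflect_ext_def)
  have "abs_cont_on (2*L - L) (2*L - 0) (\<lambda>t. f (2*L - t))"
    using assms(2) by (rule abs_cont_on_reflect)
  then have "abs_cont_on L (2*L) (\<lambda>t. (-1) ^ p * f (2*L - t))"
    by (intro abs_cont_on_cmult) simp
  then show "abs_cont_on L (2*L) (reflect_ext L p f)"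
    by (rule abs_cont_on_cong) (use reflect_ext_eq_upper assms(3) in auto)
qed (use assms(1) in auto)

lemma absolutely_integrable_reflect_ext:
  assumes "L \<ge> 0" "f absolutely_integrable_on {0..L}"
  shows "reflect_ext L p f absolutely_integrable_on {0..2*L}"
proof -
  have "reflect_ext L p f absolutely_integrable_on {0..L}"
    by (rule absolutely_integrable_spike[OF assms(2) negligible_empty]) (simp add: reflect_ext_def)
  moreover have "(\<lambda>t. (-1) ^ p *\<^sub>R f (2*L - t)) absolutely_integrable_on {L..2*L}"
    using absolutely_integrable_on_reflect_interval[OF assms(2), of "2*L"]
    by (intro absolutely_integrable_scaleR_left) simp
  then have "reflect_ext L p f absolutely_integrable_on {L..2*L}"
    by (rule absolutely_integrable_spike[OF _ negligible_sing[of L]]) (auto simp: reflect_ext_def)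
  moreover have "{0..2*L} = {0..L} \<union> {L..2*L}"
    using assms(1) by auto
  ultimately show ?thesis
    by (simp add: absolutely_integrable_Un)
qed

lemma has_real_derivative_reflect_ext_lower:
  assumes "(f has_real_derivative d) (at t within {0..L})" "t \<in> {0..L}"
  shows "(reflect_ext L p f has_real_derivative d) (at t within {0..L})"
  by (rule has_field_derivative_transform_within[OF assms(1) zero_less_one assms(2)])
     (simp add: reflect_ext_def)

lemma has_real_derivative_reflect_ext_upper:
  assumes f': "(f has_real_derivative d) (at (2*L - t) within {0..L})" and t: "t \<in> {L..2*L}"
    and away: "L < t \<or> (odd p \<longrightarrow> f L = 0)"
  shows "(reflect_ext L p f has_real_derivative (-1) ^ Suc p * d) (at t within {L..2*L})"
proof -
  have "(\<lambda>x. 2*L - x) ` {L..2*L} \<subseteq> {0..L}"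
    by auto
  moreover have "((\<lambda>x. 2*L - x) has_real_derivative -1) (at t within {L..2*L})"
    by (auto intro!: derivative_eq_intros)
  ultimately have "(f \<circ> (\<lambda>x. 2*L - x) has_real_derivative d * -1) (at t within {L..2*L})"
    by (intro DERIV_image_chain has_field_derivative_subset[OF f'])
  from DERIV_cmult[OF this, of "(-1) ^ p"]
  have reflected: "((\<lambda>x. (-1) ^ p * f (2*L - x)) has_real_derivative (-1) ^ Suc p * d) (at t within {L..2*L})"
    by (simp add: o_def)
  \<comment> \<open>For \<open>t > L\<close> both sides agree near \<open>t\<close>; for \<open>t = L\<close>, \<open>away\<close> makes them agree on all of \<open>[L,2L]\<close>.\<close>
  define \<delta> where "\<delta> = (if L < t then t - L else 1)"
  have eq: "(-1) ^ p * f (2*L - x) = reflect_ext L p f x" if "x \<in> {L..2*L}" "dist x t < \<delta>" for x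
    using that away reflect_ext_eq_upper[of L x p f]
    by (cases "L < t") (auto simp: \<delta>_def dist_real_def reflect_ext_def)
  have "\<delta> > 0"
    by (simp add: \<delta>_def)
  from has_field_derivative_transform_within[OF reflected this t eq] show ?thesis .
qed

lemma has_real_derivative_reflect_ext:
  assumes "L \<ge> 0" and f': "\<And>s. s \<in> {0..L} \<Longrightarrow> (f has_real_derivative f' s) (at s within {0..L})"
    and "odd p \<Longrightarrow> f L = 0" "even p \<Longrightarrow> f' L = 0" and t: "t \<in> {0..2*L}"
  shows "(reflect_ext L p f has_real_derivative reflect_ext L (Suc p) f' t) (at t within {0..2*L})"
proof (rule has_field_derivative_within_Icc_join)
  assume "t \<le> L"
  then show "(reflect_ext L p f has_real_derivative reflect_ext L (Suc p) f' t) (at t within {0..L})"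
    using has_real_derivative_reflect_ext_lower[OF f'] t by (simp add: reflect_ext_def)
next
  assume "L \<le> t"
  then have "reflect_ext L (Suc p) f' t = (-1) ^ Suc p * f' (2*L - t)"
    using assms(4) by (intro reflect_ext_eq_upper) auto
  then show "(reflect_ext L p f has_real_derivative reflect_ext L (Suc p) f' t) (at t within {L..2*L})"
    using has_real_derivative_reflect_ext_upper[OF f'] assms(3) t \<open>L \<le> t\<close> by simp
qed (use assms(1) in auto)

section \<open>Reflected solutions\<close>

definition solves_at :: "(nat \<Rightarrow> real \<Rightarrow> real) \<Rightarrow> nat \<Rightarrow> real \<Rightarrow> real \<Rightarrow> (nat \<Rightarrow> real \<Rightarrow> real)
    \<Rightarrow> (real \<Rightarrow> real) \<Rightarrow> real \<Rightarrow> bool" where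
  "solves_at c m lo hi D \<sigma> t \<longleftrightarrow>
     (\<exists>d. (D (m - 1) has_real_derivative d) (at t within {lo..hi}) \<and> d + (\<Sum>k<m. c k t * D k t) = \<sigma> t)"

lemma solves_ae_iff:
  "solves_ae c m lo hi D \<sigma> \<longleftrightarrow> (AE t in lborel. t \<in> {lo..hi} \<longrightarrow> solves_at c m lo hi D \<sigma> t)"
  unfolding solves_ae_def solves_at_def ..

text \<open>Differentiating \<open>t \<mapsto> (-1)^p f (2L - t)\<close> flips the sign, so the \<open>k\<close>-th derivative of
  \<open>reflect_ext L p (D 0)\<close> is \<open>reflect_ext L (k + p) (D k)\<close>.\<close>
definition reflect_derivs :: "real \<Rightarrow> nat \<Rightarrow> (nat \<Rightarrow> real \<Rightarrow> real) \<Rightarrow> nat \<Rightarrow> real \<Rightarrow> real" where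
  "reflect_derivs L p D k = reflect_ext L (k + p) (D k)"

text \<open>With \<open>p = 0\<close> the odd-order, with \<open>p = 1\<close> the even-order derivatives vanish at \<open>x\<close>;
  at \<open>x = L\<close> this is exactly what makes \<open>reflect_derivs L p D\<close> continuous.\<close>
definition parity_vanishing :: "nat \<Rightarrow> real \<Rightarrow> nat \<Rightarrow> (nat \<Rightarrow> real \<Rightarrow> real) \<Rightarrow> bool" where
  "parity_vanishing m x p D \<longleftrightarrow> (\<forall>k<m. odd (k + p) \<longrightarrow> D k x = 0)"

lemma W_space_reflect_derivs:
  assumes L: "L > 0" and "m \<ge> 1" and W: "W_space m 0 L u D" and vanish: "parity_vanishing m L p D"
  shows "W_space m 0 (2*L) (reflect_derivs L p D 0) (reflect_derivs L p D)"
  unfolding W_space_def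
proof (intro conjI allI impI ballI)
  fix k assume "k < m"
  then show "continuous_on {0..2*L} (reflect_derivs L p D k)"
    using W vanish L unfolding W_space_def parity_vanishing_def reflect_derivs_def
    by (intro continuous_on_reflect_ext) auto
next
  fix k t assume "Suc k < m" "t \<in> {0..2*L}"
  then have "(reflect_ext L (k + p) (D k) has_real_derivative reflect_ext L (Suc (k + p)) (D (Suc k)) t)
      (at t within {0..2*L})"
    using W vanish L unfolding W_space_def parity_vanishing_def
    by (intro has_real_derivative_reflect_ext) auto
  then show "(reflect_derivs L p D k has_real_derivative reflect_derivs L p D (Suc k) t) (at t within {0..2*L})"
    by (simp add: reflect_derivs_def)
next
  show "abs_cont_on 0 (2*L) (reflect_derivs L p D (m - 1))"
    using W vanish L \<open>m \<ge> 1\<close> unfolding W_space_def parity_vanishing_def reflect_derivs_def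
    by (intro abs_cont_on_reflect_ext) auto
qed simp

lemma sum_refl_coeff_reflect_derivs:
  assumes "L < t"
  shows "(\<Sum>k<m. refl_coeff L c k t * reflect_derivs L p D k t)
    = (-1) ^ p * (\<Sum>k<m. c k (2*L - t) * D k (2*L - t))"
proof -
  have "(-1::real) ^ k * (-1) ^ (k + p) = (-1) ^ p" for k
    by (simp add: power_add flip: power_mult_distrib)
  then show ?thesis
    using assms unfolding sum_distrib_left refl_coeff_def reflect_derivs_def reflect_ext_def
    by (intro sum.cong) (auto simp: algebra_simps)
qed

lemma solves_at_reflect_lower:
  assumes "L > 0" "t \<in> {0..<L}" "solves_at c m 0 L D \<sigma> t"
  shows "solves_at (refl_coeff L c) m 0 (2*L) (reflect_derivs L p D) (reflect_ext L p \<sigma>) t"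
proof -
  obtain d where d: "(D (m - 1) has_real_derivative d) (at t within {0..L})"
    and eq: "d + (\<Sum>k<m. c k t * D k t) = \<sigma> t"
    using assms(3) unfolding solves_at_def by blast
  from has_real_derivative_reflect_ext_lower[OF d, of "m - 1 + p"] assms(2)
  have lower: "(reflect_derivs L p D (m - 1) has_real_derivative d) (at t within {0..L})"
    by (simp add: reflect_derivs_def)
  have "(reflect_derivs L p D (m - 1) has_real_derivative d) (at t within {0..2*L})"
    by (rule has_field_derivative_within_Icc_join[where b = L]) (use lower assms(1,2) in simp_all)
  moreover have "d + (\<Sum>k<m. refl_coeff L c k t * reflect_derivs L p D k t) = reflect_ext L p \<sigma> t"
    using eq assms(2) by (simp add: refl_coeff_def reflect_derivs_def reflect_ext_def)
  ultimately show ?thesis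
    unfolding solves_at_def by blast
qed

lemma solves_at_reflect_upper:
  assumes "L > 0" "m \<ge> 1" "even m" "t \<in> {L<..2*L}" "solves_at c m 0 L D \<sigma> (2*L - t)"
  shows "solves_at (refl_coeff L c) m 0 (2*L) (reflect_derivs L p D) (reflect_ext L p \<sigma>) t"
proof -
  obtain d where d: "(D (m - 1) has_real_derivative d) (at (2*L - t) within {0..L})"
    and eq: "d + (\<Sum>k<m. c k (2*L - t) * D k (2*L - t)) = \<sigma> (2*L - t)"
    using assms(5) unfolding solves_at_def by blast
  have sign: "(-1::real) ^ Suc (m - 1 + p) = (-1) ^ p"
    using assms(2,3) by (simp add: power_add)
  have "t \<in> {L..2*L}" "L < t"
    using assms(4) by auto
  from has_real_derivative_reflect_ext_upper[OF d this(1) disjI1[OF this(2)], of "m - 1 + p"]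
  have upper: "(reflect_derivs L p D (m - 1) has_real_derivative (-1) ^ p * d) (at t within {L..2*L})"
    by (simp only: sign reflect_derivs_def)
  have "(reflect_derivs L p D (m - 1) has_real_derivative (-1) ^ p * d) (at t within {0..2*L})"
    by (rule has_field_derivative_within_Icc_join[where b = L]) (use upper assms(1,4) in simp_all)
  moreover have "(-1) ^ p * d + (\<Sum>k<m. refl_coeff L c k t * reflect_derivs L p D k t)
      = reflect_ext L p \<sigma> t"
    using eq assms(4) by (simp add: sum_refl_coeff_reflect_derivs reflect_ext_def flip: distrib_left)
  ultimately show ?thesis
    unfolding solves_at_def by blast
qed

lemma solves_ae_reflect_derivs:
  assumes "L > 0" "m \<ge> 1" "even m" "solves_ae c m 0 L D \<sigma>"
  shows "solves_ae (refl_coeff L c) m 0 (2*L) (reflect_derivs L p D) (reflect_ext L p \<sigma>)"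
proof -
  have lower: "AE t in lborel. t \<in> {0..L} \<longrightarrow> solves_at c m 0 L D \<sigma> t"
    using assms(4) by (simp add: solves_ae_iff)
  note upper = AE_lborel_reflect[OF lower, of "2*L"]
  show ?thesis
    unfolding solves_ae_iff using lower upper AE_lborel_singleton[of L]
  proof eventually_elim
    case (elim t)
    then show ?case
      using solves_at_reflect_lower[OF assms(1)] solves_at_reflect_upper[OF assms(1-3)]
      by (cases "t < L") auto
  qed
qed

section \<open>Uniqueness and boundary conditions\<close>

lemma W_space_diff:
  assumes "W_space m lo hi u1 D1" "W_space m lo hi u2 D2"
  shows "W_space m lo hi (\<lambda>t. u1 t - u2 t) (\<lambda>k t. D1 k t - D2 k t)"
  using assms unfolding W_space_def
  by (auto intro!: continuous_on_diff DERIV_diff abs_cont_on_diff)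

lemma solves_at_diff:
  assumes "solves_at c m lo hi D1 \<sigma>1 t" "solves_at c m lo hi D2 \<sigma>2 t"
  shows "solves_at c m lo hi (\<lambda>k t. D1 k t - D2 k t) (\<lambda>t. \<sigma>1 t - \<sigma>2 t) t"
proof -
  obtain d1 d2 where
    "(D1 (m - 1) has_real_derivative d1) (at t within {lo..hi})" "d1 + (\<Sum>k<m. c k t * D1 k t) = \<sigma>1 t"
    "(D2 (m - 1) has_real_derivative d2) (at t within {lo..hi})" "d2 + (\<Sum>k<m. c k t * D2 k t) = \<sigma>2 t"
    using assms unfolding solves_at_def by blast
  then show ?thesis
    unfolding solves_at_def
    by (intro exI[of _ "d1 - d2"] conjI DERIV_diff)
       (auto simp: right_diff_distrib sum_subtractf algebra_simps)
qed

lemma solves_ae_diff: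
  assumes "solves_ae c m lo hi D1 \<sigma>1" "solves_ae c m lo hi D2 \<sigma>2"
  shows "solves_ae c m lo hi (\<lambda>k t. D1 k t - D2 k t) (\<lambda>t. \<sigma>1 t - \<sigma>2 t)"
  using assms unfolding solves_ae_iff by eventually_elim (blast intro: solves_at_diff)

lemma nonresonant_unique:
  assumes "nonresonant c m lo hi bc"
    and "W_space m lo hi u1 D1" "W_space m lo hi u2 D2" "bc (\<lambda>k t. D1 k t - D2 k t)"
    and "solves_ae c m lo hi D1 \<sigma>" "solves_ae c m lo hi D2 \<sigma>"
  shows "\<forall>t\<in>{lo..hi}. u1 t = u2 t"
  using assms W_space_diff[OF assms(2,3)] solves_ae_diff[OF assms(5,6)]
  unfolding nonresonant_def by fastforce

lemma all_odd_less_double_iff: "(\<forall>k<2*(n::nat). odd k \<longrightarrow> P k) \<longleftrightarrow> (\<forall>j<n. P (2*j + 1))"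
proof
  assume "\<forall>j<n. P (2*j + 1)"
  moreover have "k = 2 * (k div 2) + 1 \<and> k div 2 < n" if "k < 2*n" "odd k" for k
    using that by presburger
  ultimately show "\<forall>k<2*n. odd k \<longrightarrow> P k"
    by metis
qed auto

lemma all_even_less_double_iff: "(\<forall>k<2*(n::nat). even k \<longrightarrow> P k) \<longleftrightarrow> (\<forall>j<n. P (2*j))"
proof
  assume "\<forall>j<n. P (2*j)"
  moreover have "k = 2 * (k div 2) \<and> k div 2 < n" if "k < 2*n" "even k" for k
    using that by presburger
  ultimately show "\<forall>k<2*n. even k \<longrightarrow> P k"
    by metis
qed auto

lemma parity_vanishing_even_iff: "parity_vanishing (2*n) x 0 D \<longleftrightarrow> (\<forall>j<n. D (2*j + 1) x = 0)"
  unfolding parity_vanishing_def by (simp add: all_odd_less_double_iff)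

lemma parity_vanishing_odd_iff: "parity_vanishing (2*n) x 1 D \<longleftrightarrow> (\<forall>j<n. D (2*j) x = 0)"
  unfolding parity_vanishing_def by (simp add: all_even_less_double_iff)

lemma bc_N_iff_parity_vanishing:
  "bc_N n lo hi D \<longleftrightarrow> parity_vanishing (2*n) lo 0 D \<and> parity_vanishing (2*n) hi 0 D"
  unfolding bc_N_def parity_vanishing_even_iff by blast

lemma bc_D_iff_parity_vanishing:
  "bc_D n lo hi D \<longleftrightarrow> parity_vanishing (2*n) lo 1 D \<and> parity_vanishing (2*n) hi 1 D"
  unfolding bc_D_def parity_vanishing_odd_iff by blast

lemma bc_M1_iff_parity_vanishing:
  "bc_M1 n lo hi D \<longleftrightarrow> parity_vanishing (2*n) lo 0 D \<and> parity_vanishing (2*n) hi 1 D"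
  unfolding bc_M1_def parity_vanishing_even_iff parity_vanishing_odd_iff by blast

lemma bc_M2_iff_parity_vanishing:
  "bc_M2 n lo hi D \<longleftrightarrow> parity_vanishing (2*n) lo 1 D \<and> parity_vanishing (2*n) hi 0 D"
  unfolding bc_M2_def parity_vanishing_even_iff parity_vanishing_odd_iff by blast

lemma double_reflection_periodic_solution:
  assumes T: "T > 0" and n: "n \<ge> 1"
    and W: "W_space (2*n) 0 T u D" and S: "solves_ae c (2*n) 0 T D \<sigma>"
    and vanish0: "parity_vanishing (2*n) 0 p0 D" and vanishT: "parity_vanishing (2*n) T pT D"
  defines "F \<equiv> reflect_derivs (2*T) p0 (reflect_derivs T pT D)"
  shows "W_space (2*n) 0 (4*T) (F 0) F"
    and "bc_P n 0 (4*T) F"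
    and "solves_ae (refl_coeff (2*T) (refl_coeff T c)) (2*n) 0 (4*T) F
           (reflect_ext (2*T) p0 (reflect_ext T pT \<sigma>))"
    and "\<And>t. t \<in> {0..T} \<Longrightarrow> F 0 t = u t"
proof -
  have four: "2 * (2 * T) = 4 * T" by simp
  have at_0: "F k 0 = D k 0" and at_4T: "F k (4*T) = (-1) ^ (k + p0) * D k 0" for k
    using T unfolding F_def reflect_derivs_def reflect_ext_def by auto
  have "W_space (2*n) 0 (2*T) (reflect_derivs T pT D 0) (reflect_derivs T pT D)"
    using T n W vanishT by (intro W_space_reflect_derivs) auto
  moreover have "parity_vanishing (2*n) (2*T) p0 (reflect_derivs T pT D)"
    using vanish0 T unfolding parity_vanishing_def reflect_derivs_def reflect_ext_def by auto
  ultimately show "W_space (2*n) 0 (4*T) (F 0) F"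
    using T n unfolding F_def four[symmetric] by (intro W_space_reflect_derivs) auto
  show "bc_P n 0 (4*T) F"
    unfolding bc_P_def at_0 at_4T
  proof (intro allI impI)
    fix k assume "k < 2*n"
    then show "D k 0 = (-1) ^ (k + p0) * D k 0"
      using vanish0 unfolding parity_vanishing_def by (cases "even (k + p0)") auto
  qed
  have "solves_ae (refl_coeff T c) (2*n) 0 (2*T) (reflect_derivs T pT D) (reflect_ext T pT \<sigma>)"
    using solves_ae_reflect_derivs[OF T _ _ S] n by simp
  from solves_ae_reflect_derivs[OF _ _ _ this] T n
  show "solves_ae (refl_coeff (2*T) (refl_coeff T c)) (2*n) 0 (4*T) F
      (reflect_ext (2*T) p0 (reflect_ext T pT \<sigma>))"
    unfolding F_def four by simp
  show "F 0 t = u t" if "t \<in> {0..T}" for t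
    using that T W unfolding F_def W_space_def reflect_derivs_def reflect_ext_def by auto
qed

section \<open>Green's functions\<close>

lemma is_green_continuous_on_section:
  assumes "is_green c m lo hi bc G" "t \<in> {lo..hi}"
  shows "continuous_on {lo..hi} (G t)"
proof -
  have "continuous_on ({lo..hi} \<times> {lo..hi}) (\<lambda>(t, s). G t s)"
    using assms(1) unfolding is_green_def by blast
  then have "continuous_on {lo..hi} (\<lambda>s. (\<lambda>(t, s). G t s) (t, s))"
    by (rule continuous_on_compose2) (use assms(2) in \<open>auto intro!: continuous_intros\<close>)
  then show ?thesis by simp
qed

lemma integrable_continuous_mult_absolutely_integrable:
  fixes f g :: "real \<Rightarrow> real"
  assumes "continuous_on {a..b} f" "g absolutely_integrable_on {a..b}"
  shows "(\<lambda>x. f x * g x) integrable_on {a..b}"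
proof -
  have "f \<in> borel_measurable (lebesgue_on {a..b})"
    using assms(1) by (intro continuous_imp_measurable_on_sets_lebesgue) auto
  moreover have "bounded (f ` {a..b})"
    using assms(1) by (intro compact_imp_bounded compact_continuous_image) auto
  ultimately have "(\<lambda>x. f x * g x) absolutely_integrable_on {a..b}"
    using assms(2) by (intro absolutely_integrable_bounded_measurable_product_real) auto
  then show ?thesis
    by (rule set_lebesgue_integral_eq_integral(1))
qed

lemma absolutely_integrable_double_reflect_ext:
  assumes "T > 0" "\<sigma> absolutely_integrable_on {0..T}"
  shows "reflect_ext (2*T) p0 (reflect_ext T pT \<sigma>) absolutely_integrable_on {0..4*T}"
proof -
  have "reflect_ext T pT \<sigma> absolutely_integrable_on {0..2*T}"
    using assms by (intro absolutely_integrable_reflect_ext) auto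
  from absolutely_integrable_reflect_ext[OF _ this, of p0] assms(1) show ?thesis
    by (simp add: mult.assoc)
qed

lemma green_integral_eq_periodic_green_integral:
  assumes T: "T > 0" and n: "n \<ge> 1"
    and G: "is_green a (2*n) 0 T bc G"
    and GP: "is_green (refl_coeff (2*T) (refl_coeff T a)) (2*n) 0 (4*T) (bc_P n 0 (4*T)) GP"
    and nrP: "nonresonant (refl_coeff (2*T) (refl_coeff T a)) (2*n) 0 (4*T) (bc_P n 0 (4*T))"
    and bc: "\<And>D. bc D \<Longrightarrow> parity_vanishing (2*n) 0 p0 D \<and> parity_vanishing (2*n) T pT D"
    and \<sigma>: "\<sigma> absolutely_integrable_on {0..T}" and t: "t \<in> {0..T}"
  shows "integral {0..T} (\<lambda>s. G t s * \<sigma> s)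
    = integral {0..4*T} (\<lambda>s. GP t s * reflect_ext (2*T) p0 (reflect_ext T pT \<sigma>) s)"
proof -
  let ?\<sigma> = "reflect_ext (2*T) p0 (reflect_ext T pT \<sigma>)"
  obtain D where W: "W_space (2*n) 0 T (\<lambda>t. integral {0..T} (\<lambda>s. G t s * \<sigma> s)) D"
    and "bc D" and S: "solves_ae a (2*n) 0 T D \<sigma>"
    using G \<sigma> unfolding is_green_def by blast
  have "parity_vanishing (2*n) 0 p0 D" "parity_vanishing (2*n) T pT D"
    using bc \<open>bc D\<close> by auto
  note periodic = double_reflection_periodic_solution[OF T n W S this]
  have "?\<sigma> absolutely_integrable_on {0..4*T}"
    using T \<sigma> by (rule absolutely_integrable_double_reflect_ext)
  from GP[unfolded is_green_def, THEN conjunct2, rule_format, OF this]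
  obtain DP where WP: "W_space (2*n) 0 (4*T) (\<lambda>t. integral {0..4*T} (\<lambda>s. GP t s * ?\<sigma> s)) DP"
    and "bc_P n 0 (4*T) DP" and SP: "solves_ae (refl_coeff (2*T) (refl_coeff T a)) (2*n) 0 (4*T) DP ?\<sigma>"
    by blast
  have "bc_P n 0 (4*T) (\<lambda>k x. reflect_derivs (2*T) p0 (reflect_derivs T pT D) k x - DP k x)"
    using periodic(2) \<open>bc_P n 0 (4*T) DP\<close> unfolding bc_P_def by simp
  from nonresonant_unique[OF nrP periodic(1) WP this periodic(3) SP]
  have "\<forall>x\<in>{0..4*T}. reflect_derivs (2*T) p0 (reflect_derivs T pT D) 0 x
      = integral {0..4*T} (\<lambda>s. GP x s * ?\<sigma> s)" .
  moreover have "t \<in> {0..4*T}"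
    using t T by simp
  ultimately show ?thesis
    using periodic(4)[OF t] by simp
qed

lemma sum_double_reflections:
  assumes "T > 0" "s \<in> {0..4*T}"
  shows "(\<Sum>p0\<in>{0,1}. \<Sum>pT\<in>{0,1}. reflect_ext (2*T) p0 (reflect_ext T pT \<sigma>) s)
    = (if s \<in> {0..T} then 4 * \<sigma> s else 0)"
  using assms by (auto simp: reflect_ext_def)

lemma integral_sum_double_reflections:
  assumes T: "T > 0" and g: "continuous_on {0..4*T} g" and \<sigma>: "\<sigma> absolutely_integrable_on {0..T}"
  shows "(\<Sum>p0\<in>{0,1}. \<Sum>pT\<in>{0,1}. integral {0..4*T} (\<lambda>s. g s * reflect_ext (2*T) p0 (reflect_ext T pT \<sigma>) s))
    = 4 * integral {0..T} (\<lambda>s. g s * \<sigma> s)"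
proof -
  have int: "(\<lambda>s. g s * reflect_ext (2*T) p0 (reflect_ext T pT \<sigma>) s) integrable_on {0..4*T}" for p0 pT
    using g absolutely_integrable_double_reflect_ext[OF T \<sigma>]
    by (rule integrable_continuous_mult_absolutely_integrable)
  have "(\<Sum>p0\<in>{0,1}. \<Sum>pT\<in>{0,1}. integral {0..4*T} (\<lambda>s. g s * reflect_ext (2*T) p0 (reflect_ext T pT \<sigma>) s))
      = integral {0..4*T} (\<lambda>s. g s * (\<Sum>p0\<in>{0,1}. \<Sum>pT\<in>{0,1}. reflect_ext (2*T) p0 (reflect_ext T pT \<sigma>) s))"
    by (simp add: integral_sum int integrable_sum sum_distrib_left del: sum.insert)
  also have "\<dots> = integral {0..4*T} (\<lambda>s. if s \<in> {0..T} then 4 * (g s * \<sigma> s) else 0)"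
  proof (rule integral_cong)
    fix s assume "s \<in> {0..4*T}"
    then show "g s * (\<Sum>p0\<in>{0,1}. \<Sum>pT\<in>{0,1}. reflect_ext (2*T) p0 (reflect_ext T pT \<sigma>) s)
        = (if s \<in> {0..T} then 4 * (g s * \<sigma> s) else 0)"
      by (simp only: sum_double_reflections[OF T]) simp
  qed
  also have "\<dots> = integral {0..T} (\<lambda>s. 4 * (g s * \<sigma> s))"
    by (subst integral_restrict_Int) (use T in \<open>simp add: Int_absorb2\<close>)
  finally show ?thesis
    by simp
qed

lemma eq_on_interval_if_integral_mult_diff_eq:
  fixes f g :: "real \<Rightarrow> real"
  assumes "a < b" and f: "continuous_on {a..b} f" and g: "continuous_on {a..b} g"
    and eq: "integral {a..b} (\<lambda>s. f s * (f s - g s)) = integral {a..b} (\<lambda>s. g s * (f s - g s))"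
  shows "\<forall>s\<in>{a..b}. f s = g s"
proof
  fix s assume s: "s \<in> {a..b}"
  have "(\<lambda>s. f s * (f s - g s)) integrable_on {a..b}" "(\<lambda>s. g s * (f s - g s)) integrable_on {a..b}"
    using f g by (auto intro!: integrable_continuous_interval continuous_intros)
  from has_integral_diff[OF this[THEN integrable_integral]]
  have "((\<lambda>s. (f s - g s) * (f s - g s)) has_integral 0) (cbox a b)"
    unfolding eq by (simp add: algebra_simps)
  then have "(f s - g s) * (f s - g s) = 0"
    using f g s \<open>a < b\<close>
    by (intro has_integral_0_cbox_imp_0[of a b "\<lambda>s. (f s - g s) * (f s - g s)"])
       (auto intro!: continuous_intros)
  then show "f s = g s"
    by simp
qed

lemma integral_green_average_eq_periodic_green:
  fixes n :: nat and T :: real and a :: "nat \<Rightarrow> real \<Rightarrow> real"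
    and GN GD GM1 GM2 GP :: "real \<Rightarrow> real \<Rightarrow> real"
  assumes T: "T > 0" and n: "n \<ge> 1"
    and nrP4: "nonresonant (refl_coeff (2*T) (refl_coeff T a)) (2*n) 0 (4*T) (bc_P n 0 (4*T))"
    and gN: "is_green a (2*n) 0 T (bc_N n 0 T) GN"
    and gD: "is_green a (2*n) 0 T (bc_D n 0 T) GD"
    and gM1: "is_green a (2*n) 0 T (bc_M1 n 0 T) GM1"
    and gM2: "is_green a (2*n) 0 T (bc_M2 n 0 T) GM2"
    and gP: "is_green (refl_coeff (2*T) (refl_coeff T a)) (2*n) 0 (4*T) (bc_P n 0 (4*T)) GP"
    and \<sigma>: "\<sigma> absolutely_integrable_on {0..T}" and t: "t \<in> {0..T}"
  shows "integral {0..T} (\<lambda>s. (GN t s + GD t s + GM1 t s + GM2 t s) / 4 * \<sigma> s)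
    = integral {0..T} (\<lambda>s. GP t s * \<sigma> s)"
proof -
  let ?I = "\<lambda>p0 pT. integral {0..4*T} (\<lambda>s. GP t s * reflect_ext (2*T) p0 (reflect_ext T pT \<sigma>) s)"
  note periodic = green_integral_eq_periodic_green_integral[OF T n _ gP nrP4 _ \<sigma> t]
  have "integral {0..T} (\<lambda>s. GN t s * \<sigma> s) = ?I 0 0"
    by (rule periodic[OF gN]) (simp add: bc_N_iff_parity_vanishing)
  moreover have "integral {0..T} (\<lambda>s. GD t s * \<sigma> s) = ?I 1 1"
    by (rule periodic[OF gD]) (simp add: bc_D_iff_parity_vanishing)
  moreover have "integral {0..T} (\<lambda>s. GM1 t s * \<sigma> s) = ?I 0 1"
    by (rule periodic[OF gM1]) (simp add: bc_M1_iff_parity_vanishing)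
  moreover have "integral {0..T} (\<lambda>s. GM2 t s * \<sigma> s) = ?I 1 0"
    by (rule periodic[OF gM2]) (simp add: bc_M2_iff_parity_vanishing)
  moreover have "?I 0 0 + ?I 0 1 + (?I 1 0 + ?I 1 1) = 4 * integral {0..T} (\<lambda>s. GP t s * \<sigma> s)"
    using integral_sum_double_reflections[OF T is_green_continuous_on_section[OF gP] \<sigma>] t T by simp
  moreover have "(\<lambda>s. G t s * \<sigma> s) integrable_on {0..T}" if "is_green a (2*n) 0 T bc G" for bc G
    using is_green_continuous_on_section[OF that t] \<sigma>
    by (rule integrable_continuous_mult_absolutely_integrable)
  ultimately show ?thesis
    using gN gD gM1 gM2 by (simp add: add_divide_distrib distrib_right integral_add integrable_add)
qed

theorem mainTheorem5:
  fixes n :: nat and T \<alpha> :: real and a :: "nat \<Rightarrow> real \<Rightarrow> real"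
    and GN GD GM1 GM2 GP :: "real \<Rightarrow> real \<Rightarrow> real"
  assumes n: "n \<ge> 1" and T: "T > 0" and alpha: "\<alpha> \<ge> 1"
    and coeffs: "\<forall>k<2*n. in_Lp \<alpha> 0 T (a k)"
    and nrN: "nonresonant a (2*n) 0 T (bc_N n 0 T)"
    and nrD: "nonresonant a (2*n) 0 T (bc_D n 0 T)"
    and nrM1: "nonresonant a (2*n) 0 T (bc_M1 n 0 T)"
    and nrM2: "nonresonant a (2*n) 0 T (bc_M2 n 0 T)"
    and nrN2: "nonresonant (refl_coeff T a) (2*n) 0 (2*T) (bc_N n 0 (2*T))"
    and nrD2: "nonresonant (refl_coeff T a) (2*n) 0 (2*T) (bc_D n 0 (2*T))"
    and nrP4: "nonresonant (refl_coeff (2*T) (refl_coeff T a)) (2*n) 0 (4*T) (bc_P n 0 (4*T))"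
    and gN: "is_green a (2*n) 0 T (bc_N n 0 T) GN"
    and gD: "is_green a (2*n) 0 T (bc_D n 0 T) GD"
    and gM1: "is_green a (2*n) 0 T (bc_M1 n 0 T) GM1"
    and gM2: "is_green a (2*n) 0 T (bc_M2 n 0 T) GM2"
    and gP: "is_green (refl_coeff (2*T) (refl_coeff T a)) (2*n) 0 (4*T) (bc_P n 0 (4*T)) GP"
  shows "\<forall>t\<in>{0..T}. \<forall>s\<in>{0..T}.
           GP t s = (GN t s + GD t s + GM1 t s + GM2 t s) / 4"
  \<comment> \<open>The Green's functions are given, so of the nonresonance hypotheses only \<open>nrP4\<close> is needed
    (for uniqueness); the others and \<open>coeffs\<close> only serve to guarantee their existence.\<close>
proof
  fix t assume t: "t \<in> {0..T}"
  let ?G = "\<lambda>s. (GN t s + GD t s + GM1 t s + GM2 t s) / 4"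
  have "t \<in> {0..4*T}"
    using t T by simp
  then have GP: "continuous_on {0..T} (GP t)"
    by (rule continuous_on_subset[OF is_green_continuous_on_section[OF gP]]) (use T in auto)
  have G: "continuous_on {0..T} ?G"
    using is_green_continuous_on_section[OF _ t] gN gD gM1 gM2 by (intro continuous_intros) auto
  then have "(\<lambda>s. GP t s - ?G s) absolutely_integrable_on {0..T}"
    using GP by (intro absolutely_integrable_continuous_real continuous_on_diff)
  from integral_green_average_eq_periodic_green[OF T n nrP4 gN gD gM1 gM2 gP this t]
  show "\<forall>s\<in>{0..T}. GP t s = ?G s"
    using T GP G by (intro eq_on_interval_if_integral_mult_diff_eq) auto
qed

end
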